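(* Let $\Omega\subset\mathbb R^n$ be open. For $u\in W^{s,G}_{\mathrm{loc}}(\Omega)\cap L^g_s(\mathbb R^n)$ and for $v\in W^{s,G}_{\mathrm{loc}}(\Omega)$ with compact support in $\Omega$, the quantity \[ \mathcal E(u,v)=\int_{\mathbb R^n}\int_{\mathbb R^n}g(|D^su|)\frac{D^su}{|D^su|}D^sv\,\frac{k(x,y)}{|x-y|^n}\,dy\,dx \] is finite.
   Context: Fix $n\in\mathbb N$, $s\in(0,1)$, $\Lambda\ge1$. $G(t)=\int_0^tg$ is a differentiable Young function with $g=G'$ strictly increasing, $G(1)=1$, and $1<p\le q$ with $pG(t)\le tg(t)\le qG(t)$ for $t\ge0$. $k:\mathbb R^n\times\mathbb R^n\to[0,\infty]$ measurable with $\Lambda^{-1}\le k(x,y)=k(y,x)\le\Lambda$ a.e. $D^su(x,y)=(u(x)-u(y))/|x-y|^s$. $W^{s,G}_{\mathrm{loc}}(\Omega)$: measurable $u$ with $\int_DG(|u|)dx+\int_D\int_DG(|D^su|)|x-y|^{-n}dydx<\infty$ for every open $D\Subset\Omega$ (a function with compact support in $\Omega$ is extended by zero to $\mathbb R^n$). $L^g_s(\mathbb R^n)$: measurable $u$ with $g(|u|)$ locally integrable and $\int g(|u(x)|/(1+|x|)^s)(1+|x|)^{-n-s}dx<\infty$. *)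

theory Defs
  imports "HOL-Analysis.Analysis"
begin

definition young_pq :: "(real \<Rightarrow> real) \<Rightarrow> (real \<Rightarrow> real) \<Rightarrow> real \<Rightarrow> real \<Rightarrow> bool" where
  "young_pq G g p q \<longleftrightarrow>
     1 < p \<and> p \<le> q \<and>
     (\<forall>t\<ge>0. G t = integral {0..t} g) \<and>
     (\<forall>t\<ge>0. (G has_real_derivative g t) (at t within {0..})) \<and>
     (\<forall>t\<ge>0. 0 \<le> g t) \<and>
     strict_mono_on {0..} g \<and>
     G 1 = 1 \<and>
     (\<forall>t\<ge>0. p * G t \<le> t * g t \<and> t * g t \<le> q * G t)"

definition Ds :: "real \<Rightarrow> ('a::euclidean_space \<Rightarrow> real) \<Rightarrow> 'a \<Rightarrow> 'a \<Rightarrow> real" where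
  "Ds s u x y = (u x - u y) / norm (x - y) powr s"

text \<open>W^{s,G}_loc(Omega) (functions defined on all of R^n; only values in Omega matter).\<close>
definition WsG_loc :: "real \<Rightarrow> (real \<Rightarrow> real) \<Rightarrow> 'a::euclidean_space set \<Rightarrow> ('a \<Rightarrow> real) set" where
  "WsG_loc s G \<Omega> = {u. u \<in> borel_measurable lebesgue \<and>
     (\<forall>D. open D \<and> compact (closure D) \<and> closure D \<subseteq> \<Omega> \<longrightarrow>
        (\<integral>\<^sup>+ x\<in>D. ennreal (G \<bar>u x\<bar>) \<partial>lebesgue) < \<infinity> \<and>
        (\<integral>\<^sup>+ z\<in>D \<times> D. ennreal (G \<bar>Ds s u (fst z) (snd z)\<bar> / norm (fst z - snd z) ^ DIM('a))
            \<partial>(lebesgue :: ('a \<times> 'a) measure)) < \<infinity>)}"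

definition Lgs :: "real \<Rightarrow> (real \<Rightarrow> real) \<Rightarrow> ('a::euclidean_space \<Rightarrow> real) set" where
  "Lgs s g = {u. u \<in> borel_measurable lebesgue \<and>
     (\<forall>K. compact K \<longrightarrow> set_integrable lebesgue K (\<lambda>x. g \<bar>u x\<bar>)) \<and>
     (\<integral>\<^sup>+ x. ennreal (g (\<bar>u x\<bar> / (1 + norm x) powr s) * (1 + norm x) powr (- real DIM('a) - s))
        \<partial>lebesgue) < \<infinity>}"

end

(*
  Split R^n x R^n into D x D and its complement, where D is a bounded open neighbourhood
  of the support K of v with closure in Omega.  On D x D, Young's inequality
  g(a) b <= q (G(a) + G(b)) bounds the integrand by the W^{s,G} energies of u and v on D.
  Off D x D the integrand vanishes unless one point, say x, lies in K; then
  |x - y| >= c (1 + |y|), so |x - y|^(-n-s) <= c^(-n-s) (1 + |y|)^(-n-s), and the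
  doubling property of g splits g(|D^s u|) into a term in u(x) and a term in
  u(y) / (1 + |y|)^s.  The integrand is thus dominated by a product f(x) h(y), with f
  integrable by the local energy bounds and h integrable by the tail condition
  u in L^g_s and the integrability of (1 + |y|)^(-n-s).  The kernel k only contributes
  the factor Lambda.
*)

theory Submission
  imports Defs
begin

section \<open>Lebesgue measure on products of Euclidean spaces\<close>

lemma AE_lebesgue_fst:
  assumes "AE x in (lebesgue :: 'a::euclidean_space measure). P x"
  shows "AE z in (lebesgue :: ('a \<times> 'b::euclidean_space) measure). P (fst z)"
proof -
  obtain N where N: "N \<in> null_sets lborel" "{x. \<not> P x} \<subseteq> N"
    using assms[unfolded AE_completion_iff] by (auto simp: eventually_ae_filter)
  then have "N \<times> UNIV \<in> null_sets (lborel :: ('a \<times> 'b) measure)"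
    by (auto simp flip: lborel_prod)
  then show ?thesis
    by (intro AE_completion AE_I'[of "N \<times> UNIV"]) (use N in auto)
qed

lemma AE_lebesgue_snd:
  assumes "AE y in (lebesgue :: 'b::euclidean_space measure). P y"
  shows "AE z in (lebesgue :: ('a::euclidean_space \<times> 'b) measure). P (snd z)"
proof -
  obtain N where N: "N \<in> null_sets lborel" "{y. \<not> P y} \<subseteq> N"
    using assms[unfolded AE_completion_iff] by (auto simp: eventually_ae_filter)
  then have "UNIV \<times> N \<in> null_sets (lborel :: ('a \<times> 'b) measure)"
    by (auto simp flip: lborel_prod)
  then show ?thesis
    by (intro AE_completion AE_I'[of "UNIV \<times> N"]) (use N in auto)
qed

lemma borel_measurable_lebesgue_compose:
  fixes u :: "'a::euclidean_space \<Rightarrow> real" and T :: "'b::euclidean_space \<Rightarrow> 'a"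
  assumes u: "u \<in> borel_measurable lebesgue" and T: "T \<in> borel_measurable borel"
    and null: "\<And>P. (AE x in lebesgue. P x) \<Longrightarrow> (AE y in lebesgue. P (T y))"
  shows "(\<lambda>y. u (T y)) \<in> borel_measurable lebesgue"
proof -
  obtain u' where u': "u' \<in> borel_measurable lborel" "AE x in lborel. u x = u' x"
    using completion_ex_borel_measurable_real[OF u] by auto
  have "(\<lambda>y. u' (T y)) \<in> borel_measurable lebesgue"
    using u'(1) T by (intro measurable_completion) simp
  moreover have "AE y in lebesgue. u' (T y) = u (T y)"
    using null[of "\<lambda>x. u' x = u x"] u'(2) by (simp add: AE_completion_iff eq_commute)
  ultimately show ?thesis by (rule borel_measurable_AE)
qed

lemma borel_measurable_lebesgue_fst:
  fixes u :: "'a::euclidean_space \<Rightarrow> real"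
  assumes "u \<in> borel_measurable lebesgue"
  shows "(\<lambda>z. u (fst z)) \<in> borel_measurable (lebesgue :: ('a \<times> 'b::euclidean_space) measure)"
  by (rule borel_measurable_lebesgue_compose[where T=fst, OF assms _ AE_lebesgue_fst])
    (intro borel_measurable_continuous_onI continuous_intros)

lemma borel_measurable_lebesgue_snd:
  fixes u :: "'b::euclidean_space \<Rightarrow> real"
  assumes "u \<in> borel_measurable lebesgue"
  shows "(\<lambda>z. u (snd z)) \<in> borel_measurable (lebesgue :: ('a::euclidean_space \<times> 'b) measure)"
  by (rule borel_measurable_lebesgue_compose[where T=snd, OF assms _ AE_lebesgue_snd])
    (intro borel_measurable_continuous_onI continuous_intros)

lemma borel_measurable_lebesgue_fst_snd [measurable]:
  "fst \<in> borel_measurable (lebesgue :: ('a::euclidean_space \<times> 'b::euclidean_space) measure)"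
  "snd \<in> borel_measurable (lebesgue :: ('a::euclidean_space \<times> 'b::euclidean_space) measure)"
  by (auto intro!: measurable_completion borel_measurable_continuous_onI continuous_on_fst
      continuous_on_snd continuous_on_id)

lemma nn_integral_lebesgue_prod:
  fixes F :: "'a::euclidean_space \<Rightarrow> ennreal" and H :: "'b::euclidean_space \<Rightarrow> ennreal"
  assumes F: "F \<in> borel_measurable lebesgue" and H: "H \<in> borel_measurable lebesgue"
  shows "(\<integral>\<^sup>+ z. F (fst z) * H (snd z) \<partial>(lebesgue :: ('a \<times> 'b) measure))
       = (\<integral>\<^sup>+ x. F x \<partial>lebesgue) * (\<integral>\<^sup>+ y. H y \<partial>lebesgue)"
proof -
  obtain F' where F': "F' \<in> borel_measurable lborel" "AE x in lborel. F x = F' x"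
    using completion_ex_borel_measurable[OF F] by auto
  obtain H' where H': "H' \<in> borel_measurable lborel" "AE y in lborel. H y = H' y"
    using completion_ex_borel_measurable[OF H] by auto
  have "AE z in (lebesgue :: ('a \<times> 'b) measure). F (fst z) = F' (fst z)"
    by (rule AE_lebesgue_fst) (use F'(2) in \<open>simp add: AE_completion_iff\<close>)
  moreover have "AE z in (lebesgue :: ('a \<times> 'b) measure). H (snd z) = H' (snd z)"
    by (rule AE_lebesgue_snd) (use H'(2) in \<open>simp add: AE_completion_iff\<close>)
  ultimately have "AE z in (lebesgue :: ('a \<times> 'b) measure).
      F (fst z) * H (snd z) = F' (fst z) * H' (snd z)"
    by eventually_elim simp
  then have "(\<integral>\<^sup>+ z. F (fst z) * H (snd z) \<partial>(lebesgue :: ('a \<times> 'b) measure))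
      = (\<integral>\<^sup>+ z. F' (fst z) * H' (snd z) \<partial>lebesgue)"
    by (rule nn_integral_cong_AE)
  also have "\<dots> = (\<integral>\<^sup>+ z. F' (fst z) * H' (snd z) \<partial>(lborel \<Otimes>\<^sub>M lborel))"
    by (simp add: nn_integral_completion lborel_prod)
  also have "\<dots> = (\<integral>\<^sup>+ x. F' x \<partial>lborel) * (\<integral>\<^sup>+ y. H' y \<partial>lborel)"
    using F'(1) H'(1)
    by (simp add: lborel.nn_integral_fst[symmetric] nn_integral_cmult nn_integral_multc)
  also have "\<dots> = (\<integral>\<^sup>+ x. F x \<partial>lebesgue) * (\<integral>\<^sup>+ y. H y \<partial>lebesgue)"
    using F'(2) H'(2) by (simp add: nn_integral_completion nn_integral_cong_AE)
  finally show ?thesis .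
qed

lemma nn_integral_lebesgue_prod_symmetric:
  fixes f h :: "'a::euclidean_space \<Rightarrow> real"
  assumes [measurable]: "f \<in> borel_measurable lebesgue" "h \<in> borel_measurable lebesgue"
  shows "(\<integral>\<^sup>+ z. ennreal (f (fst z)) * ennreal (h (snd z)) \<partial>(lebesgue :: ('a \<times> 'a) measure))
      + (\<integral>\<^sup>+ z. ennreal (h (fst z)) * ennreal (f (snd z)) \<partial>(lebesgue :: ('a \<times> 'a) measure))
    = 2 * ((\<integral>\<^sup>+ x. ennreal (f x) \<partial>lebesgue) * (\<integral>\<^sup>+ y. ennreal (h y) \<partial>lebesgue))"
proof -
  have "(\<integral>\<^sup>+ z. ennreal (f (fst z)) * ennreal (h (snd z)) \<partial>(lebesgue :: ('a \<times> 'a) measure))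
      = (\<integral>\<^sup>+ x. ennreal (f x) \<partial>lebesgue) * (\<integral>\<^sup>+ y. ennreal (h y) \<partial>lebesgue)"
    by (rule nn_integral_lebesgue_prod) measurable
  moreover have "(\<integral>\<^sup>+ z. ennreal (h (fst z)) * ennreal (f (snd z)) \<partial>(lebesgue :: ('a \<times> 'a) measure))
      = (\<integral>\<^sup>+ y. ennreal (h y) \<partial>lebesgue) * (\<integral>\<^sup>+ x. ennreal (f x) \<partial>lebesgue)"
    by (rule nn_integral_lebesgue_prod) measurable
  ultimately show ?thesis
    by (simp add: mult_2 mult.commute)
qed

section \<open>The tail weight and separation from compact sets\<close>

lemma ex_power2_ivl:
  assumes t: "1 \<le> (t::real)"
  shows "\<exists>k. 2 ^ k \<le> t \<and> t < 2 ^ (k + 1)"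
proof -
  obtain k where k: "2 ^ k \<le> nat \<lfloor>t\<rfloor>" "nat \<lfloor>t\<rfloor> < (2::nat) ^ (k + 1)"
    using ex_power_ivl1[of 2 "nat \<lfloor>t\<rfloor>"] t by (auto simp: le_nat_floor)
  then have "real (2 ^ k) \<le> real (nat \<lfloor>t\<rfloor>)" "real (nat \<lfloor>t\<rfloor>) + 1 \<le> real (2 ^ (k + 1))"
    by (simp_all only: of_nat_le_iff flip: of_nat_Suc Suc_eq_plus1 Suc_le_eq)
  moreover have "real (nat \<lfloor>t\<rfloor>) \<le> t" "t < real (nat \<lfloor>t\<rfloor>) + 1"
    using t by linarith+
  ultimately show ?thesis
    by (metis of_nat_numeral of_nat_power order.trans order.strict_trans2)
qed

definition tail_weight :: "real \<Rightarrow> 'a::euclidean_space \<Rightarrow> real" where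
  "tail_weight s y = (1 + norm y) powr (- real DIM('a) - s)"

lemma tail_weight_nonneg: "0 \<le> tail_weight s y"
  by (simp add: tail_weight_def)

lemma borel_measurable_tail_weight [measurable]:
  "tail_weight s \<in> borel_measurable (lebesgue :: 'a::euclidean_space measure)"
  unfolding tail_weight_def by (intro measurable_completion) simp

lemma tail_weight_le_dyadic_sum:
  assumes s: "0 < s"
  shows "ennreal (tail_weight s y) \<le> (\<Sum>k. ennreal ((2 powr (- real DIM('a) - s)) ^ k)
    * indicator (ball (0::'a::euclidean_space) (2 ^ (k + 1))) y)"
proof -
  obtain k where k: "2 ^ k \<le> 1 + norm y" "1 + norm y < 2 ^ (k + 1)"
    using ex_power2_ivl[of "1 + norm y"] by auto
  have "tail_weight s y \<le> (2 ^ k) powr (- real DIM('a) - s)"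
    unfolding tail_weight_def using k(1) s by (intro powr_mono2') auto
  also have "\<dots> = (2 powr (- real DIM('a) - s)) ^ k"
    by (simp add: powr_realpow[symmetric] powr_powr mult.commute)
  finally have "ennreal (tail_weight s y)
      \<le> ennreal ((2 powr (- real DIM('a) - s)) ^ k) * indicator (ball (0::'a) (2 ^ (k + 1))) y"
    using k(2) by (simp add: ennreal_leI)
  also have "\<dots> \<le> (\<Sum>k. ennreal ((2 powr (- real DIM('a) - s)) ^ k)
      * indicator (ball (0::'a) (2 ^ (k + 1))) y)"
    using sum_le_suminf[OF summableI, of "{k}"] by simp
  finally show ?thesis .
qed

lemma nn_integral_dyadic_ball:
  "(\<integral>\<^sup>+ y. ennreal ((2 powr (- real DIM('a) - s)) ^ k)
      * indicator (ball (0::'a::euclidean_space) (2 ^ (k + 1))) y \<partial>lebesgue)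
    = ennreal (2 ^ DIM('a) * (2 powr (- s)) ^ k) * emeasure lebesgue (ball (0::'a) 1)"
proof -
  define \<rho> where "\<rho> = (2::real) powr (- real DIM('a) - s)"
  have "\<rho> ^ k * (2 ^ (k + 1)) ^ DIM('a) = 2 ^ DIM('a) * (\<rho> * 2 ^ DIM('a)) ^ k"
    by (simp add: power_mult_distrib power_add power_mult[symmetric] mult.commute mult.left_commute)
  also have "\<rho> * 2 ^ DIM('a) = 2 powr (- s)"
    by (simp add: \<rho>_def powr_realpow[symmetric] powr_add[symmetric])
  finally have "ennreal (\<rho> ^ k) * ennreal ((2 ^ (k + 1)) ^ DIM('a))
      = ennreal (2 ^ DIM('a) * (2 powr (- s)) ^ k)"
    by (simp add: \<rho>_def ennreal_mult[symmetric] del: power_Suc)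
  moreover have "emeasure lebesgue (ball (0::'a) (2 ^ (k + 1)))
      = ennreal ((2 ^ (k + 1)) ^ DIM('a)) * emeasure lebesgue (ball (0::'a) 1)"
    by (rule emeasure_lebesgue_ball_conv_unit_ball) simp
  moreover have "ball (0::'a) (2 ^ (k + 1)) \<in> sets lebesgue"
    by simp
  ultimately show ?thesis
    unfolding \<rho>_def[symmetric] by (simp only: nn_integral_cmult_indicator mult.assoc[symmetric])
qed

lemma nn_integral_tail_weight_finite:
  assumes s: "0 < s"
  shows "(\<integral>\<^sup>+ y. ennreal (tail_weight s y) \<partial>(lebesgue :: 'a::euclidean_space measure)) < \<infinity>"
proof -
  have "(\<integral>\<^sup>+ y. ennreal (tail_weight s y) \<partial>(lebesgue :: 'a measure))
      \<le> (\<integral>\<^sup>+ y. (\<Sum>k. ennreal ((2 powr (- real DIM('a) - s)) ^ k)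
          * indicator (ball (0::'a) (2 ^ (k + 1))) y) \<partial>lebesgue)"
    by (intro nn_integral_mono tail_weight_le_dyadic_sum s)
  also have "\<dots> = (\<Sum>k. \<integral>\<^sup>+ y. ennreal ((2 powr (- real DIM('a) - s)) ^ k)
      * indicator (ball (0::'a) (2 ^ (k + 1))) y \<partial>lebesgue)"
    by (intro nn_integral_suminf borel_measurable_times_ennreal borel_measurable_const
        borel_measurable_indicator) simp
  also have "\<dots> = (\<Sum>k. ennreal (2 ^ DIM('a) * (2 powr (- s)) ^ k))
      * emeasure lebesgue (ball (0::'a) 1)"
    unfolding nn_integral_dyadic_ball by (rule ennreal_suminf_multc)
  also have "\<dots> < \<infinity>"
  proof -
    have "(2::real) powr (- s) < 1"
      using s by (simp add: powr_less_one)
    then have "summable (\<lambda>k. 2 ^ DIM('a) * ((2::real) powr (- s)) ^ k)"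
      by (intro summable_mult summable_geometric) auto
    then have "(\<Sum>k. ennreal (2 ^ DIM('a) * (2 powr (- s)) ^ k)) \<noteq> top"
      by (rule ennreal_suminf_neq_top) auto
    then show ?thesis
      using emeasure_lborel_ball_finite[of "0::'a" 1] by (simp add: ennreal_mult_less_top less_top)
  qed
  finally show ?thesis .
qed

lemma dist_ge_weighted_norm:
  fixes x y :: "'a::real_normed_vector"
  assumes \<delta>: "0 < \<delta>" "\<delta> \<le> dist x y" and R: "0 \<le> R" "norm x \<le> R"
  shows "\<delta> / (\<delta> + 1 + R) * (1 + norm y) \<le> dist x y"
proof -
  have "norm y \<le> R + dist x y"
    using R(2) norm_triangle_ineq2[of y x] by (simp add: dist_norm norm_minus_commute)
  then have "\<delta> * (1 + norm y) \<le> \<delta> * (1 + R) + \<delta> * dist x y"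
    using mult_left_mono[of "norm y" "R + dist x y" \<delta>] \<delta> by (simp add: algebra_simps)
  also have "\<dots> \<le> dist x y * (\<delta> + 1 + R)"
    using mult_right_mono[OF \<delta>(2), of "1 + R"] R by (simp add: algebra_simps)
  finally show ?thesis
    using \<delta> R by (simp add: field_simps)
qed

lemma compact_subset_open_weighted_margin:
  fixes K \<Omega> :: "'a::euclidean_space set"
  assumes K: "compact K" "K \<subseteq> \<Omega>" and \<Omega>: "open \<Omega>"
  obtains D c where "open D" "bounded D" "closure D \<subseteq> \<Omega>" "K \<subseteq> D" "0 < c"
    "\<And>x y. x \<in> K \<Longrightarrow> y \<notin> D \<Longrightarrow> c * (1 + norm y) \<le> dist x y"
proof -
  have "K \<inter> - \<Omega> = {}"
    using K(2) by blast
  then obtain D V where D: "open D" "compact (closure D)" "K \<subseteq> D"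
    and V: "open V" "- \<Omega> \<subseteq> V" "D \<inter> V = {}"
    using separation_normal_compact[OF K(1) closed_Compl[OF \<Omega>]] by metis
  have "closure D \<subseteq> \<Omega>"
    using V open_Int_closure_eq_empty[of V D] by blast
  obtain \<delta> where \<delta>: "0 < \<delta>" "\<And>x y. x \<in> K \<Longrightarrow> y \<notin> D \<Longrightarrow> \<delta> \<le> dist x y"
    using separate_compact_closed[OF K(1) closed_Compl[OF D(1)]] D(3) by blast
  obtain R where R: "0 \<le> R" "\<And>x. x \<in> K \<Longrightarrow> norm x \<le> R"
    using compact_imp_bounded[OF K(1)] by (meson bounded_pos less_imp_le)
  show ?thesis
  proof
    show "0 < \<delta> / (\<delta> + 1 + R)"
      using \<delta> R by simp
    show "\<delta> / (\<delta> + 1 + R) * (1 + norm y) \<le> dist x y" if "x \<in> K" "y \<notin> D" for x y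
      using dist_ge_weighted_norm[OF \<delta>(1) \<delta>(2)[OF that] R(1) R(2)[OF that(1)]] .
  qed (use D \<open>closure D \<subseteq> \<Omega>\<close> in auto)
qed

section \<open>Young functions with growth indices \<open>p\<close> and \<open>q\<close>\<close>

locale young_function =
  fixes G g :: "real \<Rightarrow> real" and p q :: real
  assumes young_pq: "young_pq G g p q"
begin

lemma p_gt_1: "1 < p" and p_le_q: "p \<le> q" and g_nonneg: "0 \<le> t \<Longrightarrow> 0 \<le> g t"
  and g_strict_mono: "strict_mono_on {0..} g" and G_1: "G 1 = 1"
  and p_G_le: "0 \<le> t \<Longrightarrow> p * G t \<le> t * g t" and le_q_G: "0 \<le> t \<Longrightarrow> t * g t \<le> q * G t"
  and G_deriv_within: "0 \<le> t \<Longrightarrow> (G has_real_derivative g t) (at t within {0..})"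
  and G_integral: "0 \<le> t \<Longrightarrow> G t = integral {0..t} g"
  using young_pq unfolding young_pq_def by auto

lemma G_nonneg: "0 \<le> t \<Longrightarrow> 0 \<le> G t"
  using le_q_G[of t] g_nonneg[of t] p_gt_1 p_le_q by (smt (verit) zero_le_mult_iff)

lemma G_0: "G 0 = 0"
  using G_integral[of 0] by simp

lemma g_mono: "0 \<le> a \<Longrightarrow> a \<le> b \<Longrightarrow> g a \<le> g b"
  using strict_mono_onD[OF g_strict_mono, of a b] by (cases "a = b") auto

lemma G_deriv: "0 < t \<Longrightarrow> (G has_real_derivative g t) (at t)"
  using G_deriv_within[of t] at_within_open[of t "{0<..}"]
  by (metis DERIV_subset atLeast_iff greaterThan_iff less_imp_le open_greaterThan subsetI)

lemma G_mono:
  assumes a: "0 \<le> a" and ab: "a \<le> b"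
  shows "G a \<le> G b"
proof (cases "a = 0")
  case True
  then show ?thesis using G_0 G_nonneg a ab by simp
next
  case False
  with a have "0 < a" by simp
  show ?thesis
  proof (rule DERIV_nonneg_imp_nondecreasing[OF ab])
    fix x assume "a \<le> x"
    with \<open>0 < a\<close> have "0 < x" by simp
    then show "\<exists>y. (G has_real_derivative y) (at x) \<and> 0 \<le> y"
      using G_deriv g_nonneg by fastforce
  qed
qed

lemma young_inequality:
  assumes a: "0 \<le> a" and b: "0 \<le> b"
  shows "g a * b \<le> q * (G a + G b)"
proof (cases "b \<le> a")
  case True
  then have "g a * b \<le> g a * a"
    using g_nonneg[OF a] by (simp add: mult_left_mono)
  also have "\<dots> \<le> q * G a"
    using le_q_G[OF a] by (simp add: mult.commute)
  finally show ?thesis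
    using G_nonneg[OF b] p_gt_1 p_le_q by (smt (verit) mult_left_mono)
next
  case False
  then have "g a * b \<le> g b * b"
    using g_mono[OF a, of b] b by (simp add: mult_right_mono)
  also have "\<dots> \<le> q * G b"
    using le_q_G[OF b] by (simp add: mult.commute)
  finally show ?thesis
    using G_nonneg[OF a] p_gt_1 p_le_q by (smt (verit) mult_left_mono)
qed

lemma g_le_sum: "0 \<le> a \<Longrightarrow> 0 \<le> b \<Longrightarrow> 0 \<le> t \<Longrightarrow> t \<le> a + b \<Longrightarrow> g t \<le> g (2 * a) + g (2 * b)"
  using g_mono[of t "2 * a"] g_mono[of t "2 * b"] g_nonneg[of "2 * a"] g_nonneg[of "2 * b"]
  by (cases "a \<le> b") auto

text \<open>The \<open>\<Delta>\<^sub>2\<close>-condition: \<open>x \<mapsto> G x / x\<^sup>q\<close> is nonincreasing because \<open>x g x \<le> q G x\<close>.\<close>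
lemma G_scale_le:
  assumes l: "1 \<le> l" and t: "0 \<le> t"
  shows "G (l * t) \<le> l powr q * G t"
proof (cases "t = 0")
  case True
  then show ?thesis by (simp add: G_0)
next
  case False
  with t have t: "0 < t" by simp
  define \<phi> where "\<phi> x = G x * x powr (- q)" for x
  have "\<phi> (l * t) \<le> \<phi> t"
  proof (rule DERIV_nonpos_imp_nonincreasing[of t "l * t" \<phi>])
    show "t \<le> l * t" using l t by simp
    fix x assume "t \<le> x"
    then have x: "0 < x" using t by simp
    have "(\<phi> has_real_derivative g x * x powr (- q) + G x * (- q * x powr (- q - 1))) (at x)"
      unfolding \<phi>_def using x by (auto intro!: derivative_eq_intros G_deriv)
    moreover have "g x * x powr (- q) + G x * (- q * x powr (- q - 1))
        = x powr (- q - 1) * (x * g x - q * G x)"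
      using x by (simp add: powr_diff algebra_simps)
    moreover have "x powr (- q - 1) * (x * g x - q * G x) \<le> 0"
      using le_q_G[of x] x by (simp add: mult_nonneg_nonpos)
    ultimately show "\<exists>y. (\<phi> has_real_derivative y) (at x) \<and> y \<le> 0" by auto
  qed
  then have "G (l * t) * (l * t) powr (- q) * (l * t) powr q \<le> G t * t powr (- q) * (l * t) powr q"
    unfolding \<phi>_def by (simp add: mult_right_mono)
  then show ?thesis
    using l t by (simp add: powr_mult powr_minus field_simps)
qed

lemma g_scale_le:
  assumes l: "1 \<le> l" and t: "0 \<le> t"
  shows "g (l * t) \<le> q / p * l powr (q - 1) * g t"
proof (cases "t = 0")
  case True
  have "1 \<le> q / p * l powr (q - 1)"
    using p_gt_1 p_le_q l ge_one_powr_ge_zero[of l "q - 1"]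
      mult_mono[of 1 "q / p" 1 "l powr (q - 1)"]
    by simp
  then show ?thesis
    using True g_nonneg[of 0] mult_right_mono[of 1 "q / p * l powr (q - 1)" "g 0"] by simp
next
  case False
  with t have t: "0 < t" by simp
  have "(l * t) * g (l * t) \<le> q * G (l * t)"
    using le_q_G[of "l * t"] l t by simp
  also have "\<dots> \<le> q * (l powr q * G t)"
    using G_scale_le[OF l] t p_gt_1 p_le_q by simp
  also have "\<dots> \<le> q * (l powr q * (t * g t / p))"
  proof -
    have "G t \<le> t * g t / p"
      using p_G_le[of t] t p_gt_1 by (simp add: pos_le_divide_eq mult.commute)
    then show ?thesis
      using p_gt_1 p_le_q by (intro mult_left_mono) auto
  qed
  also have "\<dots> = (l * t) * (q / p * l powr (q - 1) * g t)"
    using l t p_gt_1 by (simp add: powr_diff field_simps)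
  finally show ?thesis
    using l t by (simp only: mult_le_cancel_left_pos[of "l * t"] mult_pos_pos)
qed

lemma g_1_pos: "0 < g 1"
  using g_strict_mono g_nonneg[of 0] by (smt (verit) atLeast_iff strict_mono_onD)

lemma le_G_linear: "0 \<le> b \<Longrightarrow> b \<le> q * (1 + G b) / g 1"
  using young_inequality[of 1 b] G_1 g_1_pos by (simp add: pos_le_divide_eq mult.commute)

lemma borel_measurable_g_abs: "f \<in> borel_measurable M \<Longrightarrow> (\<lambda>z. g \<bar>f z\<bar>) \<in> borel_measurable M"
proof -
  have "(\<lambda>x. g (max 0 x)) \<in> borel_measurable borel"
    by (rule borel_measurable_mono) (auto simp: mono_def intro!: g_mono)
  then show "f \<in> borel_measurable M \<Longrightarrow> (\<lambda>z. g \<bar>f z\<bar>) \<in> borel_measurable M"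
    using measurable_compose[of "\<lambda>z. \<bar>f z\<bar>" M borel "\<lambda>x. g (max 0 x)"] by simp
qed

lemma borel_measurable_G_abs: "f \<in> borel_measurable M \<Longrightarrow> (\<lambda>z. G \<bar>f z\<bar>) \<in> borel_measurable M"
proof -
  have "(\<lambda>x. G (max 0 x)) \<in> borel_measurable borel"
    by (rule borel_measurable_mono) (auto simp: mono_def intro!: G_mono)
  then show "f \<in> borel_measurable M \<Longrightarrow> (\<lambda>z. G \<bar>f z\<bar>) \<in> borel_measurable M"
    using measurable_compose[of "\<lambda>z. \<bar>f z\<bar>" M borel "\<lambda>x. G (max 0 x)"] by simp
qed

end

section \<open>Fractional energy densities\<close>

text \<open>Densities with respect to \<open>|x - y|^(-n) dx dy\<close>. Off \<open>D \<times> D\<close> the cross density is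
  bounded by products of \<open>support_factor\<close> at one point and \<open>tail_factor\<close> at the other.\<close>

definition Ds_energy :: "real \<Rightarrow> (real \<Rightarrow> real) \<Rightarrow> ('a::euclidean_space \<Rightarrow> real) \<Rightarrow> 'a \<times> 'a \<Rightarrow> real"
  where "Ds_energy s G u z = G \<bar>Ds s u (fst z) (snd z)\<bar> / norm (fst z - snd z) ^ DIM('a)"

definition cross_density ::
  "real \<Rightarrow> (real \<Rightarrow> real) \<Rightarrow> ('a::euclidean_space \<Rightarrow> real) \<Rightarrow> ('a \<Rightarrow> real) \<Rightarrow> 'a \<times> 'a \<Rightarrow> real"
  where "cross_density s g u v z =
    g \<bar>Ds s u (fst z) (snd z)\<bar> * \<bar>Ds s v (fst z) (snd z)\<bar> / norm (fst z - snd z) ^ DIM('a)"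

definition support_factor :: "(real \<Rightarrow> real) \<Rightarrow> ('a \<Rightarrow> real) \<Rightarrow> ('a \<Rightarrow> real) \<Rightarrow> 'a \<Rightarrow> real"
  where "support_factor g u v x = \<bar>v x\<bar> * (1 + g \<bar>u x\<bar>)"

definition tail_factor :: "real \<Rightarrow> (real \<Rightarrow> real) \<Rightarrow> ('a::euclidean_space \<Rightarrow> real) \<Rightarrow> 'a \<Rightarrow> real"
  where "tail_factor s g u y = tail_weight s y * (1 + g (\<bar>u y\<bar> / (1 + norm y) powr s))"

lemma abs_Ds_commute: "\<bar>Ds s u y x\<bar> = \<bar>Ds s u x y\<bar>"
  by (simp add: Ds_def norm_minus_commute abs_minus_commute)

lemma cross_density_commute: "cross_density s g u v (y, x) = cross_density s g u v (x, y)"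
  by (simp add: cross_density_def abs_Ds_commute norm_minus_commute)

lemma borel_measurable_Ds [measurable]:
  fixes u :: "'a::euclidean_space \<Rightarrow> real"
  assumes "u \<in> borel_measurable lebesgue"
  shows "(\<lambda>z. Ds s u (fst z) (snd z)) \<in> borel_measurable (lebesgue :: ('a \<times> 'a) measure)"
proof -
  note [measurable] =
    borel_measurable_lebesgue_fst[OF assms] borel_measurable_lebesgue_snd[OF assms]
  show ?thesis unfolding Ds_def by measurable
qed

context young_function
begin

lemma borel_measurable_Ds_energy:
  fixes u :: "'a::euclidean_space \<Rightarrow> real"
  assumes [measurable]: "u \<in> borel_measurable lebesgue"
  shows "Ds_energy s G u \<in> borel_measurable lebesgue"
proof -
  have [measurable]: "(\<lambda>z. G \<bar>Ds s u (fst z) (snd z)\<bar>) \<in> borel_measurable lebesgue"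
    by (intro borel_measurable_G_abs) measurable
  show ?thesis
    unfolding Ds_energy_def by measurable
qed

lemma borel_measurable_cross_density:
  fixes u v :: "'a::euclidean_space \<Rightarrow> real"
  assumes [measurable]: "u \<in> borel_measurable lebesgue" "v \<in> borel_measurable lebesgue"
  shows "cross_density s g u v \<in> borel_measurable lebesgue"
proof -
  have [measurable]: "(\<lambda>z. g \<bar>Ds s u (fst z) (snd z)\<bar>) \<in> borel_measurable lebesgue"
    by (intro borel_measurable_g_abs) measurable
  show ?thesis
    unfolding cross_density_def by measurable
qed

lemma borel_measurable_support_factor:
  assumes [measurable]: "u \<in> borel_measurable M" "v \<in> borel_measurable M"
  shows "support_factor g u v \<in> borel_measurable M"
proof -
  have [measurable]: "(\<lambda>x. g \<bar>u x\<bar>) \<in> borel_measurable M"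
    by (intro borel_measurable_g_abs) measurable
  show ?thesis
    unfolding support_factor_def by measurable
qed

lemma borel_measurable_g_rescaled:
  fixes u :: "'a::euclidean_space \<Rightarrow> real"
  assumes [measurable]: "u \<in> borel_measurable lebesgue"
  shows "(\<lambda>y. g (\<bar>u y\<bar> / (1 + norm y) powr s)) \<in> borel_measurable lebesgue"
proof -
  have [measurable]: "(\<lambda>y::'a. (1 + norm y) powr s) \<in> borel_measurable lebesgue"
    by (intro measurable_completion) simp
  have "(\<lambda>y. g \<bar>u y / (1 + norm y) powr s\<bar>) \<in> borel_measurable lebesgue"
    by (intro borel_measurable_g_abs) measurable
  then show ?thesis
    by simp
qed

lemma borel_measurable_tail_factor:
  fixes u :: "'a::euclidean_space \<Rightarrow> real"
  assumes "u \<in> borel_measurable lebesgue"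
  shows "tail_factor s g u \<in> borel_measurable lebesgue"
  using borel_measurable_g_rescaled[OF assms, of s] unfolding tail_factor_def by measurable

lemma cross_density_nonneg: "0 \<le> cross_density s g u v z"
  by (simp add: cross_density_def g_nonneg)

lemma support_factor_nonneg: "0 \<le> support_factor g u v x"
  by (simp add: support_factor_def g_nonneg)

lemma tail_factor_nonneg: "0 \<le> tail_factor s g u y"
  by (simp add: tail_factor_def tail_weight_nonneg g_nonneg)

lemma Ds_energy_nonneg: "0 \<le> Ds_energy s G u z"
  by (simp add: Ds_energy_def G_nonneg)

lemma cross_density_le_Ds_energy:
  "cross_density s g u v z \<le> q * (Ds_energy s G u z + Ds_energy s G v z)"
  using young_inequality[of "\<bar>Ds s u (fst z) (snd z)\<bar>" "\<bar>Ds s v (fst z) (snd z)\<bar>"]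
  by (simp add: cross_density_def Ds_energy_def divide_right_mono add_divide_distrib[symmetric])

section \<open>Pointwise bounds for the cross density\<close>

lemma g_Ds_far_le:
  fixes u :: "'a::euclidean_space \<Rightarrow> real"
  assumes s: "0 < s" and c: "0 < c" and far: "c * (1 + norm y) \<le> dist x y"
  shows "g \<bar>Ds s u x y\<bar>
    \<le> q / p * max 1 (2 / c powr s) powr (q - 1)
      * ((1 + g \<bar>u x\<bar>) * (1 + g (\<bar>u y\<bar> / (1 + norm y) powr s)))"
proof -
  define r where "r = dist x y"
  define l where "l = max 1 (2 / c powr s)"
  define \<tau> where "\<tau> = \<bar>u y\<bar> / (1 + norm y) powr s"
  have y: "1 \<le> 1 + norm y" by simp
  have r: "0 < r" "c * (1 + norm y) \<le> r"
    using far c unfolding r_def by (smt (verit) mult_pos_pos norm_ge_zero)+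
  have "c powr s * (1 + norm y) powr s \<le> r powr s"
    using r c s by (simp add: powr_mult[symmetric] powr_mono2)
  then have "2 / r powr s \<le> 2 / (c powr s * (1 + norm y) powr s)"
    using c r y by (intro divide_left_mono mult_pos_pos) (auto simp: add_nonneg_eq_0_iff)
  also have "\<dots> \<le> l / (1 + norm y) powr s"
    using y by (simp add: l_def divide_right_mono flip: divide_divide_eq_left)
  finally have scale_y: "2 / r powr s \<le> l / (1 + norm y) powr s" .
  also have "\<dots> \<le> l / 1"
    using y s by (intro divide_left_mono ge_one_powr_ge_zero) (auto simp: l_def add_nonneg_eq_0_iff)
  finally have scale_x: "2 / r powr s \<le> l" by simp
  have "g \<bar>Ds s u x y\<bar> \<le> g (2 * (\<bar>u x\<bar> / r powr s)) + g (2 * (\<bar>u y\<bar> / r powr s))"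
    using r by (intro g_le_sum)
      (auto simp: Ds_def r_def dist_norm add_divide_distrib[symmetric] intro!: divide_right_mono)
  also have "\<dots> \<le> g (l * \<bar>u x\<bar>) + g (l * \<tau>)"
  proof (intro add_mono g_mono)
    show "2 * (\<bar>u x\<bar> / r powr s) \<le> l * \<bar>u x\<bar>"
      using mult_right_mono[OF scale_x, of "\<bar>u x\<bar>"] by simp
    show "2 * (\<bar>u y\<bar> / r powr s) \<le> l * \<tau>"
      using mult_right_mono[OF scale_y, of "\<bar>u y\<bar>"] by (simp add: \<tau>_def)
  qed simp_all
  also have "\<dots> \<le> q / p * l powr (q - 1) * (g \<bar>u x\<bar> + g \<tau>)"
    using g_scale_le[of l "\<bar>u x\<bar>"] g_scale_le[of l \<tau>] by (simp add: l_def \<tau>_def distrib_left)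
  also have "\<dots> \<le> q / p * l powr (q - 1) * ((1 + g \<bar>u x\<bar>) * (1 + g \<tau>))"
    using p_gt_1 p_le_q g_nonneg[of "\<bar>u x\<bar>"] g_nonneg[of \<tau>]
    by (intro mult_left_mono) (simp_all add: \<tau>_def algebra_simps)
  finally show ?thesis
    by (simp add: l_def \<tau>_def)
qed

lemma abs_Ds_far_le:
  fixes v :: "'a::euclidean_space \<Rightarrow> real"
  assumes s: "0 < s" and c: "0 < c" and far: "c * (1 + norm y) \<le> dist x y" and vy: "v y = 0"
  shows "\<bar>Ds s v x y\<bar> / norm (x - y) ^ DIM('a)
    \<le> c powr (- real DIM('a) - s) * (\<bar>v x\<bar> * tail_weight s y)"
proof -
  define e where "e = - real DIM('a) - s"
  have cy: "0 < c * (1 + norm y)"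
    using c by (simp add: add_pos_nonneg)
  then have r: "0 < dist x y"
    using far by linarith
  have "\<bar>Ds s v x y\<bar> / norm (x - y) ^ DIM('a) = \<bar>v x\<bar> * dist x y powr e"
    using r by (simp add: Ds_def vy e_def dist_norm powr_realpow[symmetric] powr_diff
        powr_minus divide_inverse powr_add abs_mult)
  also have "\<dots> \<le> \<bar>v x\<bar> * (c * (1 + norm y)) powr e"
    using powr_mono2'[OF _ cy far, of e] s by (intro mult_left_mono) (simp_all add: e_def)
  finally show ?thesis
    using c by (simp add: e_def tail_weight_def powr_mult mult_ac)
qed

lemma cross_density_far_le:
  fixes u v :: "'a::euclidean_space \<Rightarrow> real"
  assumes s: "0 < s" and c: "0 < c" and far: "c * (1 + norm y) \<le> dist x y" and vy: "v y = 0"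
  shows "cross_density s g u v (x, y)
    \<le> q / p * max 1 (2 / c powr s) powr (q - 1) * c powr (- real DIM('a) - s)
      * support_factor g u v x * tail_factor s g u y"
proof -
  have "cross_density s g u v (x, y) = g \<bar>Ds s u x y\<bar> * (\<bar>Ds s v x y\<bar> / norm (x - y) ^ DIM('a))"
    by (simp add: cross_density_def)
  also have "\<dots> \<le> q / p * max 1 (2 / c powr s) powr (q - 1)
        * ((1 + g \<bar>u x\<bar>) * (1 + g (\<bar>u y\<bar> / (1 + norm y) powr s)))
      * (c powr (- real DIM('a) - s) * (\<bar>v x\<bar> * tail_weight s y))"
    using g_Ds_far_le[OF s c far] abs_Ds_far_le[where v=v, OF s c far vy]
    by (intro mult_mono') (auto simp: g_nonneg)
  finally show ?thesis
    by (simp add: support_factor_def tail_factor_def mult_ac)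
qed

lemma cross_density_le_split:
  fixes u v :: "'a::euclidean_space \<Rightarrow> real"
  assumes s: "0 < s" and c: "0 < c" and KD: "K \<subseteq> D"
    and far: "\<And>x y. x \<in> K \<Longrightarrow> y \<notin> D \<Longrightarrow> c * (1 + norm y) \<le> dist x y"
    and v: "\<And>x. x \<notin> K \<Longrightarrow> v x = 0"
  defines "M \<equiv> q / p * max 1 (2 / c powr s) powr (q - 1) * c powr (- real DIM('a) - s)"
  shows "cross_density s g u v z
    \<le> q * (Ds_energy s G u z * indicator (D \<times> D) z + Ds_energy s G v z * indicator (D \<times> D) z)
      + M * (support_factor g u v (fst z) * tail_factor s g u (snd z)
        + tail_factor s g u (fst z) * support_factor g u v (snd z))"
proof -
  obtain x y where z: "z = (x, y)" by fastforce
  have "0 \<le> M"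
    using p_gt_1 p_le_q by (simp add: M_def)
  then have nonneg: "0 \<le> M * (support_factor g u v a * tail_factor s g u b)"
    "0 \<le> M * (tail_factor s g u b * support_factor g u v a)" for a b
    by (simp_all add: support_factor_nonneg tail_factor_nonneg)
  have energy:
    "0 \<le> q * (Ds_energy s G u z * indicator (D \<times> D) z + Ds_energy s G v z * indicator (D \<times> D) z)"
    using p_gt_1 p_le_q by (simp add: Ds_energy_nonneg)
  consider "x \<in> D" "y \<in> D" | "x \<in> K" "y \<notin> D" | "y \<in> K" "x \<notin> D" | "x \<notin> K" "y \<notin> K"
    using KD by blast
  then show ?thesis
  proof cases
    case 1
    then show ?thesis
      using cross_density_le_Ds_energy[of s u v z]
        nonneg(1)[where a=x and b=y] nonneg(2)[where a=y and b=x]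
      by (simp add: z distrib_left)
  next
    case 2
    then have "cross_density s g u v (x, y) \<le> M * (support_factor g u v x * tail_factor s g u y)"
      unfolding M_def using KD cross_density_far_le[OF s c far, of x y v u] v
      by (auto simp: mult_ac)
    then show ?thesis
      using energy nonneg(2)[where a=y and b=x] by (simp add: z distrib_left)
  next
    case 3
    then have "cross_density s g u v (y, x) \<le> M * (tail_factor s g u x * support_factor g u v y)"
      unfolding M_def using KD cross_density_far_le[OF s c far, of y x v u] v
      by (auto simp: mult_ac)
    then show ?thesis
      using energy nonneg(1)[where a=x and b=y] by (simp add: z cross_density_commute distrib_left)
  next
    case 4
    then have "cross_density s g u v z = 0"
      by (simp add: z v cross_density_def Ds_def)
    then show ?thesis
      using energy nonneg(1)[where a=x and b=y] nonneg(2)[where a=y and b=x]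
      by (simp add: z distrib_left)
  qed
qed

lemma nn_integral_support_factor_finite:
  fixes u v :: "'a::euclidean_space \<Rightarrow> real"
  assumes u: "u \<in> borel_measurable lebesgue" and v: "v \<in> borel_measurable lebesgue"
    and D: "D \<in> sets lebesgue" "emeasure lebesgue D < \<infinity>"
    and v0: "\<And>x. x \<notin> D \<Longrightarrow> v x = 0"
    and Gu: "(\<integral>\<^sup>+ x\<in>D. ennreal (G \<bar>u x\<bar>) \<partial>lebesgue) < \<infinity>"
    and Gv: "(\<integral>\<^sup>+ x\<in>D. ennreal (G \<bar>v x\<bar>) \<partial>lebesgue) < \<infinity>"
  shows "(\<integral>\<^sup>+ x. ennreal (support_factor g u v x) \<partial>lebesgue) < \<infinity>"
proof -
  define a where "a = q / g 1"
  have a: "0 \<le> a"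
    using p_gt_1 p_le_q g_1_pos by (simp add: a_def)
  have "support_factor g u v x \<le> a + a * G \<bar>v x\<bar> + q * (G \<bar>u x\<bar> + G \<bar>v x\<bar>)" for x
    using le_G_linear[of "\<bar>v x\<bar>"] young_inequality[of "\<bar>u x\<bar>" "\<bar>v x\<bar>"]
    by (simp add: support_factor_def a_def algebra_simps add_divide_distrib)
  then have "ennreal (support_factor g u v x)
      \<le> (ennreal a + ennreal (a + q) * ennreal (G \<bar>v x\<bar>) + ennreal q * ennreal (G \<bar>u x\<bar>))
         * indicator D x" for x
    using v0[of x] a p_gt_1 p_le_q G_nonneg
    by (cases "x \<in> D")
      (auto simp: support_factor_def ennreal_plus[symmetric] ennreal_mult[symmetric] algebra_simps
        simp del: ennreal_plus intro!: ennreal_leI)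
  then have "(\<integral>\<^sup>+ x. ennreal (support_factor g u v x) \<partial>lebesgue)
      \<le> (\<integral>\<^sup>+ x\<in>D. ennreal a + ennreal (a + q) * ennreal (G \<bar>v x\<bar>) + ennreal q * ennreal (G \<bar>u x\<bar>)
           \<partial>lebesgue)"
    by (intro nn_integral_mono) (simp add: mult.commute)
  also have "\<dots> = ennreal a * emeasure lebesgue D
      + ennreal (a + q) * (\<integral>\<^sup>+ x\<in>D. ennreal (G \<bar>v x\<bar>) \<partial>lebesgue)
      + ennreal q * (\<integral>\<^sup>+ x\<in>D. ennreal (G \<bar>u x\<bar>) \<partial>lebesgue)"
    using D(1) borel_measurable_G_abs[OF u] borel_measurable_G_abs[OF v]
    by (simp add: nn_integral_add nn_integral_cmult distrib_right nn_integral_cmult_indicator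
        mult.assoc)
  also have "\<dots> < \<infinity>"
    using D(2) Gu Gv by (simp add: ennreal_mult_less_top)
  finally show ?thesis .
qed

lemma nn_integral_tail_factor_finite:
  fixes u :: "'a::euclidean_space \<Rightarrow> real"
  assumes s: "0 < s" and u: "u \<in> Lgs s g"
  shows "(\<integral>\<^sup>+ y. ennreal (tail_factor s g u y) \<partial>lebesgue) < \<infinity>"
proof -
  have tail: "(\<integral>\<^sup>+ y. ennreal (g (\<bar>u y\<bar> / (1 + norm y) powr s) * tail_weight s y) \<partial>lebesgue) < \<infinity>"
    using u by (simp add: Lgs_def tail_weight_def)
  have [measurable]: "(\<lambda>y. g (\<bar>u y\<bar> / (1 + norm y) powr s)) \<in> borel_measurable lebesgue"
    using u by (intro borel_measurable_g_rescaled) (simp add: Lgs_def)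
  have "(\<integral>\<^sup>+ y. ennreal (tail_factor s g u y) \<partial>lebesgue)
      = (\<integral>\<^sup>+ y. ennreal (tail_weight s y)
          + ennreal (g (\<bar>u y\<bar> / (1 + norm y) powr s) * tail_weight s y)
          \<partial>lebesgue)"
    by (intro nn_integral_cong)
      (simp add: tail_factor_def tail_weight_nonneg g_nonneg ennreal_plus[symmetric] algebra_simps
        del: ennreal_plus)
  also have "\<dots> = (\<integral>\<^sup>+ y. ennreal (tail_weight s y) \<partial>(lebesgue :: 'a measure))
      + (\<integral>\<^sup>+ y. ennreal (g (\<bar>u y\<bar> / (1 + norm y) powr s) * tail_weight s y) \<partial>lebesgue)"
    by (rule nn_integral_add) measurable
  also have "\<dots> < \<infinity>"
    using nn_integral_tail_weight_finite[OF s] tail by simp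
  finally show ?thesis .
qed

lemma nn_integral_cross_density_le:
  fixes u v :: "'a::euclidean_space \<Rightarrow> real"
  assumes s: "0 < s" and c: "0 < c" and D: "open D" "K \<subseteq> D"
    and far: "\<And>x y. x \<in> K \<Longrightarrow> y \<notin> D \<Longrightarrow> c * (1 + norm y) \<le> dist x y"
    and v0: "\<And>x. x \<notin> K \<Longrightarrow> v x = 0"
    and [measurable]: "u \<in> borel_measurable lebesgue" "v \<in> borel_measurable lebesgue"
  defines "M \<equiv> q / p * max 1 (2 / c powr s) powr (q - 1) * c powr (- real DIM('a) - s)"
  shows "(\<integral>\<^sup>+ z. ennreal (cross_density s g u v z) \<partial>lebesgue)
    \<le> ennreal q * ((\<integral>\<^sup>+ z\<in>D \<times> D. ennreal (Ds_energy s G u z) \<partial>lebesgue)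
        + (\<integral>\<^sup>+ z\<in>D \<times> D. ennreal (Ds_energy s G v z) \<partial>lebesgue))
      + 2 * ennreal M * ((\<integral>\<^sup>+ x. ennreal (support_factor g u v x) \<partial>lebesgue)
        * (\<integral>\<^sup>+ y. ennreal (tail_factor s g u y) \<partial>lebesgue))"
proof -
  define X where "X = support_factor g u v"
  define T where "T = tail_factor s g u"
  have XT [measurable]: "X \<in> borel_measurable lebesgue" "T \<in> borel_measurable lebesgue"
    unfolding X_def T_def
    by (simp_all add: borel_measurable_support_factor borel_measurable_tail_factor)
  have [measurable]: "D \<times> D \<in> sets (lebesgue :: ('a \<times> 'a) measure)"
    using D(1) by (simp add: open_Times)
  note [measurable] = borel_measurable_Ds_energy[of u s] borel_measurable_Ds_energy[of v s]
    borel_measurable_lebesgue_fst borel_measurable_lebesgue_snd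
  have "0 \<le> M"
    using p_gt_1 p_le_q by (simp add: M_def)
  define B where "B z = ennreal q * (ennreal (Ds_energy s G u z) * indicator (D \<times> D) z
      + ennreal (Ds_energy s G v z) * indicator (D \<times> D) z)
    + ennreal M
      * (ennreal (X (fst z)) * ennreal (T (snd z)) + ennreal (T (fst z)) * ennreal (X (snd z)))"
    for z
  have "ennreal (cross_density s g u v z) \<le> B z" for z
  proof -
    have "cross_density s g u v z
      \<le> q * (Ds_energy s G u z * indicator (D \<times> D) z + Ds_energy s G v z * indicator (D \<times> D) z)
        + M * (X (fst z) * T (snd z) + T (fst z) * X (snd z))"
      unfolding M_def X_def T_def by (rule cross_density_le_split[OF s c D(2) far v0])
    moreover have "ennreal (q * (Ds_energy s G u z * indicator (D \<times> D) z
        + Ds_energy s G v z * indicator (D \<times> D) z)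
        + M * (X (fst z) * T (snd z) + T (fst z) * X (snd z))) = B z"
      using p_gt_1 p_le_q \<open>0 \<le> M\<close> by (simp add: B_def X_def T_def ennreal_mult
          Ds_energy_nonneg support_factor_nonneg tail_factor_nonneg ennreal_indicator)
    ultimately show ?thesis
      by (metis ennreal_leI)
  qed
  then have "(\<integral>\<^sup>+ z. ennreal (cross_density s g u v z) \<partial>lebesgue) \<le> (\<integral>\<^sup>+ z. B z \<partial>lebesgue)"
    by (intro nn_integral_mono)
  also have "\<dots> = ennreal q * ((\<integral>\<^sup>+ z\<in>D \<times> D. ennreal (Ds_energy s G u z) \<partial>lebesgue)
        + (\<integral>\<^sup>+ z\<in>D \<times> D. ennreal (Ds_energy s G v z) \<partial>lebesgue))
      + ennreal M * (2 * ((\<integral>\<^sup>+ x. ennreal (X x) \<partial>lebesgue) * (\<integral>\<^sup>+ y. ennreal (T y) \<partial>lebesgue)))"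
    unfolding B_def
    by (simp add: nn_integral_add nn_integral_cmult nn_integral_lebesgue_prod_symmetric XT)
  finally show ?thesis
    by (simp add: X_def T_def mult_ac)
qed

lemma integrable_cross_density:
  fixes u v :: "'a::euclidean_space \<Rightarrow> real"
  assumes s: "0 < s" and \<Omega>: "open \<Omega>"
    and u: "u \<in> WsG_loc s G \<Omega>" "u \<in> Lgs s g" and v: "v \<in> WsG_loc s G \<Omega>"
    and K: "compact K" "K \<subseteq> \<Omega>" and v0: "\<And>x. x \<notin> K \<Longrightarrow> v x = 0"
  shows "integrable lebesgue (cross_density s g u v)"
proof -
  obtain D c where D: "open D" "bounded D" "closure D \<subseteq> \<Omega>" "K \<subseteq> D" and c: "0 < c"
    and far: "\<And>x y. x \<in> K \<Longrightarrow> y \<notin> D \<Longrightarrow> c * (1 + norm y) \<le> dist x y"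
    using compact_subset_open_weighted_margin[OF K \<Omega>] by metis
  have [measurable]: "u \<in> borel_measurable lebesgue" "v \<in> borel_measurable lebesgue"
    using u v by (simp_all add: WsG_loc_def)
  have "compact (closure D)"
    using D(2) by simp
  then have local: "(\<integral>\<^sup>+ x\<in>D. ennreal (G \<bar>w x\<bar>) \<partial>lebesgue) < \<infinity>"
      "(\<integral>\<^sup>+ z\<in>D \<times> D. ennreal (Ds_energy s G w z) \<partial>lebesgue) < \<infinity>"
    if "w \<in> WsG_loc s G \<Omega>" for w
    using that D by (auto simp: WsG_loc_def Ds_energy_def)
  have "(\<integral>\<^sup>+ x. ennreal (support_factor g u v x) \<partial>lebesgue) < \<infinity>"
  proof (rule nn_integral_support_factor_finite[of u v D])
    show "emeasure lebesgue D < \<infinity>"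
      using emeasure_bounded_finite[OF D(2)] D(1) by (simp add: less_top)
    show "x \<notin> D \<Longrightarrow> v x = 0" for x
      using D(4) v0 by blast
  qed (use D(1) local[OF u(1)] local[OF v] in auto)
  then have "(\<integral>\<^sup>+ z. ennreal (cross_density s g u v z) \<partial>lebesgue) < \<infinity>"
    using nn_integral_cross_density_le[where u=u and v=v and K=K, OF s c D(1,4) far v0]
      local(2)[OF u(1)] local(2)[OF v]
      nn_integral_tail_factor_finite[OF s u(2)]
    by (auto simp: ennreal_mult_less_top order.strict_trans1)
  then show ?thesis
    by (intro integrableI_nonneg)
      (simp_all add: cross_density_nonneg borel_measurable_cross_density)
qed

lemma norm_kernel_integrand_le:
  fixes u v :: "'a::euclidean_space \<Rightarrow> real"
  shows "norm (g \<bar>Ds s u x y\<bar> * sgn (Ds s u x y) * Ds s v x y * w / norm (x - y) ^ DIM('a))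
    \<le> \<bar>w\<bar> * cross_density s g u v (x, y)"
proof -
  have "\<bar>sgn (Ds s u x y)\<bar> * \<bar>w\<bar> \<le> \<bar>w\<bar>"
    by (simp add: abs_sgn_eq)
  from mult_left_mono[OF this cross_density_nonneg[of s u v "(x, y)"]] show ?thesis
    by (simp add: cross_density_def abs_mult g_nonneg mult_ac)
qed

end

theorem lemma2p4:
  fixes \<Omega> :: "'a::euclidean_space set"
    and s \<Lambda> p q :: real
    and G g :: "real \<Rightarrow> real"
    and k :: "'a \<times> 'a \<Rightarrow> ennreal"
    and u v :: "'a \<Rightarrow> real"
  assumes "0 < s" "s < 1" "1 \<le> \<Lambda>"
    and "young_pq G g p q"
    and "k \<in> borel_measurable (lebesgue :: ('a \<times> 'a) measure)"
    and "AE z in (lebesgue :: ('a \<times> 'a) measure).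
           ennreal (1 / \<Lambda>) \<le> k z \<and> k z = k (snd z, fst z) \<and> k z \<le> ennreal \<Lambda>"
    and "open \<Omega>"
    and "u \<in> WsG_loc s G \<Omega>" "u \<in> Lgs s g"
    and "v \<in> WsG_loc s G \<Omega>"
    and "\<exists>K. compact K \<and> K \<subseteq> \<Omega> \<and> (\<forall>x. x \<notin> K \<longrightarrow> v x = 0)"
  shows "integrable (lebesgue :: ('a \<times> 'a) measure)
           (\<lambda>z. g \<bar>Ds s u (fst z) (snd z)\<bar> * sgn (Ds s u (fst z) (snd z)) * Ds s v (fst z) (snd z)
                * enn2real (k z) / norm (fst z - snd z) ^ DIM('a))"
proof -
  interpret young_function G g p q
    by standard (rule assms(4))
  obtain K where K: "compact K" "K \<subseteq> \<Omega>" and v0: "\<And>x. x \<notin> K \<Longrightarrow> v x = 0"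
    using assms(11) by blast
  have [measurable]: "u \<in> borel_measurable lebesgue" "v \<in> borel_measurable lebesgue"
    "k \<in> borel_measurable lebesgue"
    using assms(5,8,10) by (simp_all add: WsG_loc_def)
  have [measurable]: "(\<lambda>z. g \<bar>Ds s u (fst z) (snd z)\<bar>) \<in> borel_measurable lebesgue"
    by (intro borel_measurable_g_abs) measurable
  have "AE z in lebesgue. \<bar>enn2real (k z)\<bar> \<le> \<Lambda>"
    using assms(6) by eventually_elim (use assms(3) in \<open>auto intro: enn2real_leI\<close>)
  then have bound: "AE z in lebesgue.
      norm (g \<bar>Ds s u (fst z) (snd z)\<bar> * sgn (Ds s u (fst z) (snd z))
      * Ds s v (fst z) (snd z) * enn2real (k z) / norm (fst z - snd z) ^ DIM('a))
    \<le> norm (\<Lambda> * cross_density s g u v z)"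
    by eventually_elim
      (rule order_trans[OF norm_kernel_integrand_le], use assms(3) in
        \<open>auto simp: abs_mult abs_of_nonneg[OF cross_density_nonneg]
          intro!: mult_right_mono cross_density_nonneg\<close>)
  have "integrable lebesgue (\<lambda>z. \<Lambda> * cross_density s g u v z)"
    using integrable_cross_density[OF assms(1,7,8,9,10) K v0] by simp
  then show ?thesis
    by (rule Bochner_Integration.integrable_bound[OF _ _ bound]) measurable
qed

end
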